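(* Let $\Sigma$ be an alphabet with $|\Sigma|\geq 3$. Let $f\colon\mathcal{T}(\Sigma)\to\mathcal{T}(\Sigma)$ be WCP and such that $f(\Sigma)\subseteq\Sigma$. Then the restriction of $f$ to $\Sigma$ is either a constant function or the identity.
   Context: Let $\Sigma$ be an alphabet not containing $0,1$. A binary tree over $\Sigma$ is a finite set $t \subseteq \{0,1\}^*\Sigma$ such that for any $ua, vb \in t$ with $ua \neq vb$, $u$ is not a prefix of $v$ and $v$ is not a prefix of $u$; $\mathcal{T}(\Sigma)$ is the set of such trees, $\mathbf 0=\emptyset$, each letter $a$ is identified with $\{a\}$, and $t\star t' = 0.t\cup 1.t'$. Every map $h\colon\Sigma\to\mathcal{T}(\Sigma)$ extends uniquely to an endomorphism of $\langle\mathcal{T}(\Sigma),\star\rangle$, still denoted $h$. A function $g\colon\mathcal{T}(\Sigma)^n\to\mathcal{T}(\Sigma)$ is WCP if for every idempotent mapping $h\colon\Sigma\to\Sigma$ and all $\vec u,\vec v\in\Sigma^n$, $h(\vec u)=h(\vec v)$ implies $h(g(\vec u))=h(g(\vec v))$, where $h(\langle u_1,\ldots,u_n\rangle)=\langle h(u_1),\ldots,h(u_n)\rangle$ (here $n=1$). *)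

theory Defs
  imports Main "HOL-Library.Sublist"
begin

text \<open>Letters of the alphabet Sigma are the elements of a type 'a (disjoint from
the direction symbols 0,1 by construction). A word u a in {0,1}^* Sigma is a pair
(u, a) with u :: bool list (False = 0, True = 1).\<close>

type_synonym 'a tree = "(bool list \<times> 'a) set"

definition is_tree :: "'a tree \<Rightarrow> bool" where
  "is_tree t \<longleftrightarrow> finite t \<and>
     (\<forall>u a v b. (u, a) \<in> t \<longrightarrow> (v, b) \<in> t \<longrightarrow> (u, a) \<noteq> (v, b) \<longrightarrow>
        \<not> prefix u v \<and> \<not> prefix v u)"

definition leaf :: "'a \<Rightarrow> 'a tree" where
  "leaf a = {([], a)}"

definition tstar :: "'a tree \<Rightarrow> 'a tree \<Rightarrow> 'a tree" where
  "tstar t t' = (\<lambda>(u, a). (False # u, a)) ` t \<union> (\<lambda>(u, a). (True # u, a)) ` t'"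

text \<open>Extension of h : Sigma -> T(Sigma) to an endomorphism of (T(Sigma), star):
every leaf u a is replaced by the tree h a grafted at u.\<close>
definition ext :: "('a \<Rightarrow> 'a tree) \<Rightarrow> 'a tree \<Rightarrow> 'a tree" where
  "ext h t = (\<Union>(u, a) \<in> t. (\<lambda>(v, b). (u @ v, b)) ` h a)"

text \<open>WCP for unary functions (n = 1): for every idempotent h : Sigma -> Sigma and
letters u, v, h u = h v implies h(g u) = h(g v), where h acts on trees via its
endomorphic extension.\<close>
definition WCP1 :: "('a tree \<Rightarrow> 'a tree) \<Rightarrow> bool" where
  "WCP1 g \<longleftrightarrow> (\<forall>h :: 'a \<Rightarrow> 'a. h \<circ> h = h \<longrightarrow>
      (\<forall>u v. h u = h v \<longrightarrow> ext (leaf \<circ> h) (g (leaf u)) = ext (leaf \<circ> h) (g (leaf v))))"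

end

theory Submission
  imports Defs
begin

(* Write f (leaf a) = leaf (g a). Identifying the letter b with a is an idempotent map,
   so WCP forces g a and g b to be identified as well: either g a = g b, or g fixes or
   swaps a and b. If g is not constant, some pair a, b is fixed or swapped; a third
   letter c, compared with a and with b, rules out the swap and is itself fixed, and
   then every letter is fixed. *)

lemma leaf_eq_iff [simp]: "leaf a = leaf b \<longleftrightarrow> a = b"
  unfolding leaf_def by simp

lemma ext_leaf_comp_leaf [simp]: "ext (leaf \<circ> h) (leaf x) = leaf (h x)"
  unfolding ext_def leaf_def by simp

definition merge :: "'a \<Rightarrow> 'a \<Rightarrow> 'a \<Rightarrow> 'a" where
  "merge a b x = (if x = b then a else x)"

lemma merge_idem: "merge a b \<circ> merge a b = merge a b"
  by (auto simp: merge_def fun_eq_iff)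

lemma WCP1_letter_map_pair:
  assumes wcp: "WCP1 f" and g: "\<And>x. f (leaf x) = leaf (g x)" and "a \<noteq> b"
  shows "g a = g b \<or> (g a = a \<and> g b = b) \<or> (g a = b \<and> g b = a)"
proof -
  have "merge a b a = merge a b b"
    by (simp add: merge_def)
  then have "ext (leaf \<circ> merge a b) (f (leaf a)) = ext (leaf \<circ> merge a b) (f (leaf b))"
    using wcp merge_idem[of a b] unfolding WCP1_def by blast
  then have "merge a b (g a) = merge a b (g b)"
    by (simp add: g)
  then show ?thesis
    using \<open>a \<noteq> b\<close> by (auto simp: merge_def split: if_splits)
qed

lemma ex_distinct_from_two:
  assumes "\<exists>x y z :: 'a. x \<noteq> y \<and> y \<noteq> z \<and> x \<noteq> z"
  shows "\<exists>c :: 'a. c \<noteq> a \<and> c \<noteq> b"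
proof -
  obtain x y z :: 'a where "x \<noteq> y" "y \<noteq> z" "x \<noteq> z"
    using assms by blast
  then show ?thesis
    by metis
qed

lemma constant_or_id_if_pairs_merged:
  fixes g :: "'a \<Rightarrow> 'a"
  assumes three: "\<exists>x y z :: 'a. x \<noteq> y \<and> y \<noteq> z \<and> x \<noteq> z"
    and pair: "\<And>a b. a \<noteq> b \<Longrightarrow> g a = g b \<or> (g a = a \<and> g b = b) \<or> (g a = b \<and> g b = a)"
  shows "(\<exists>c. \<forall>a. g a = c) \<or> g = id"
proof (cases "\<exists>c. \<forall>a. g a = c")
  case False
  then obtain a b where "g a \<noteq> g b"
    by metis
  then have "a \<noteq> b" and ab: "(g a = a \<and> g b = b) \<or> (g a = b \<and> g b = a)"
    using pair[of a b] by auto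
  have fixed: "g c = c \<and> g a = a \<and> g b = b" if "c \<noteq> a" "c \<noteq> b" for c
    using ab pair[OF \<open>c \<noteq> a\<close>] pair[OF \<open>c \<noteq> b\<close>] \<open>a \<noteq> b\<close> that by auto
  obtain c where "c \<noteq> a" "c \<noteq> b"
    using ex_distinct_from_two[OF three] by blast
  with fixed have "g a = a" "g b = b"
    by auto
  have "g x = x" for x
    using fixed \<open>g a = a\<close> \<open>g b = b\<close> by (cases "x = a \<or> x = b") auto
  then show ?thesis
    by auto
qed simp

theorem mainTheorem8:
  fixes f :: "'a tree \<Rightarrow> 'a tree"
  assumes card3: "\<exists>a b c :: 'a. a \<noteq> b \<and> b \<noteq> c \<and> a \<noteq> c"
    and trees: "\<forall>t. is_tree t \<longrightarrow> is_tree (f t)"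
    and wcp: "WCP1 f"
    and letters: "\<forall>a. \<exists>b. f (leaf a) = leaf b"
  shows "(\<exists>c. \<forall>a. f (leaf a) = leaf c) \<or> (\<forall>a. f (leaf a) = leaf a)"
proof -
  \<comment> \<open>Only the values of f on letters matter.\<close>
  obtain g where g: "\<And>a. f (leaf a) = leaf (g a)"
    using letters by metis
  have "(\<exists>c. \<forall>a. g a = c) \<or> g = id"
    using constant_or_id_if_pairs_merged[OF card3 WCP1_letter_map_pair[OF wcp g]] .
  then show ?thesis
    by (auto simp: g)
qed

end
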